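(* Let $1 \leqslant p < 2$ and let $\{X_{n}, \, n \geqslant 1 \}$ be a sequence of identically distributed pairwise positively quadrant dependent random variables. Suppose that $\frac{1}{n^{1/p}}\sum_{k=1}^{n} (X_{k} - c) \to 0$ almost surely for some finite constant $c$, and that \[ \sum_{1 \leqslant k < j < \infty} (kj)^{-1/p}\, G_{X_{k},X_{j}} \big(k^{1/p},j^{1/p} \big) < \infty . \] Then $\sum_{k=1}^{\infty} \mathbb{P} \left\{\lvert X_{1} \rvert > k^{1/p} \right\} < \infty$.
   Context: A sequence $\{X_{n}, \, n \geqslant 1 \}$ of random variables is pairwise positively quadrant dependent (pairwise PQD) if $\mathbb{P}\{X_{k} \leqslant x_{k}, X_{j} \leqslant x_{j}\} - \mathbb{P}\{X_{k} \leqslant x_{k}\}\mathbb{P}\{X_{j} \leqslant x_{j}\} \geqslant 0$ for all reals $x_{k}, x_{j}$ and all positive integers $k \neq j$. For random variables $X_k, X_j$ and $u,v>0$, \[ G_{X_{k},X_{j}}(u,v) := \int_{-v}^{v} \int_{-u}^{u} \big[\mathbb{P} \{X_{k} > x, X_{j} > y \} - \mathbb{P} \{X_{k} > x \} \mathbb{P} \{X_{j} > y \}\big] \, \mathrm{d}x \, \mathrm{d}y . \] *)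

theory Defs
  imports "HOL-Probability.Probability"
begin

definition pairwise_PQD :: "'a measure \<Rightarrow> (nat \<Rightarrow> 'a \<Rightarrow> real) \<Rightarrow> bool" where
  "pairwise_PQD M X \<longleftrightarrow>
     (\<forall>k j xk xj. 1 \<le> k \<longrightarrow> 1 \<le> j \<longrightarrow> k \<noteq> j \<longrightarrow>
        measure M {\<omega>\<in>space M. X k \<omega> \<le> xk \<and> X j \<omega> \<le> xj}
        - measure M {\<omega>\<in>space M. X k \<omega> \<le> xk} * measure M {\<omega>\<in>space M. X j \<omega> \<le> xj} \<ge> 0)"

definition G :: "'a measure \<Rightarrow> ('a \<Rightarrow> real) \<Rightarrow> ('a \<Rightarrow> real) \<Rightarrow> real \<Rightarrow> real \<Rightarrow> real" where
  "G M Xk Xj u v =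
     (LINT z : {-u..u} \<times> {-v..v} | lborel.
        measure M {\<omega>\<in>space M. Xk \<omega> > fst z \<and> Xj \<omega> > snd z}
        - measure M {\<omega>\<in>space M. Xk \<omega> > fst z} * measure M {\<omega>\<in>space M. Xj \<omega> > snd z})"

end

(*
  Put t_k = k^(1/p) and let Z_k = w_k(X_k), Z'_k = w_k(-X_k), where the tail weight w_k is the
  piecewise linear function that vanishes below t_k/2 and equals 1 above t_k.  Then
  P(|X_1| > t_k) <= E Z_k + E Z'_k, so it suffices that both expectations are summable.

  The normalised sums converge, so X_k = o(t_k) and almost surely only finitely many Z_k are
  nonzero.  By Hoeffding's identity, Cov(Z_k, Z_j) is 4 / (t_k t_j) times the integral of the
  quadrant covariance over a subrectangle of [-t_k, t_k] x [-t_j, t_j]; positive quadrant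
  dependence makes the integrand nonnegative, so the covariance is at most
  4 (kj)^(-1/p) G(t_k, t_j), and the hypothesis bounds the sums of covariances.  If the
  expectations were not summable, Chebyshev's inequality would make sum_(k<n) Z_k exceed any
  level with probability at least 1/2 for large n, contradicting almost sure finiteness.
*)
theory Submission
  imports Defs
begin

lemma (in finite_measure) borel_measurable_measure_section:
  fixes P :: "'a \<Rightarrow> 'b::euclidean_space \<Rightarrow> bool"
  assumes "Measurable.pred (M \<Otimes>\<^sub>M lborel) (\<lambda>x. P (fst x) (snd x))"
  shows "(\<lambda>z. measure M {\<omega>\<in>space M. P \<omega> z}) \<in> borel_measurable lborel"
proof -
  interpret pair_sigma_finite M "lborel :: 'b measure" ..
  let ?Q = "{x \<in> space (M \<Otimes>\<^sub>M lborel). P (fst x) (snd x)}"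
  have "(\<lambda>z. enn2real (emeasure M ((\<lambda>\<omega>. (\<omega>, z)) -` ?Q))) \<in> borel_measurable lborel"
    using measurable_emeasure_Pair2[OF predE[OF assms]] by measurable
  then show ?thesis
    by (rule measurable_cong[THEN iffD1, rotated]) (auto simp: measure_def space_pair_measure)
qed

lemma (in finite_measure) integral_measure_section_eq_set_integral:
  fixes S :: "'b::euclidean_space set" and P :: "'a \<Rightarrow> 'b \<Rightarrow> bool"
  assumes S: "S \<in> sets lborel" "emeasure lborel S < \<infinity>"
    and P: "Measurable.pred (M \<Otimes>\<^sub>M lborel) (\<lambda>x. P (fst x) (snd x))"
  shows "(\<integral>\<omega>. measure lborel {z\<in>S. P \<omega> z} \<partial>M)
       = (LINT z:S|lborel. measure M {\<omega>\<in>space M. P \<omega> z})"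
proof -
  interpret pair_sigma_finite M "lborel :: 'b measure" ..
  define Q where "Q = {x \<in> space (M \<Otimes>\<^sub>M lborel). snd x \<in> S \<and> P (fst x) (snd x)}"
  have Q: "Q \<in> sets (M \<Otimes>\<^sub>M lborel)"
    unfolding Q_def using P S by measurable
  have section1: "Pair \<omega> -` Q = {z\<in>S. P \<omega> z}" if "\<omega> \<in> space M" for \<omega>
    using that by (auto simp: Q_def space_pair_measure)
  have section2: "(\<lambda>\<omega>. (\<omega>, z)) -` Q = (if z \<in> S then {\<omega>\<in>space M. P \<omega> z} else {})" for z
    by (auto simp: Q_def space_pair_measure)
  have finite_section: "emeasure lborel {z\<in>S. P \<omega> z} < \<infinity>" for \<omega>
    using S by (intro le_less_trans[OF emeasure_mono S(2)]) auto
  have "(\<lambda>\<omega>. enn2real (emeasure lborel (Pair \<omega> -` Q))) \<in> borel_measurable M"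
    using measurable_emeasure_Pair1[OF Q] by measurable
  then have meas1: "(\<lambda>\<omega>. measure lborel {z\<in>S. P \<omega> z}) \<in> borel_measurable M"
    by (rule measurable_cong[THEN iffD1, rotated]) (simp add: section1 measure_def)
  have "(\<lambda>z. enn2real (emeasure M ((\<lambda>\<omega>. (\<omega>, z)) -` Q))) \<in> borel_measurable lborel"
    using measurable_emeasure_Pair2[OF Q] by measurable
  then have meas2: "(\<lambda>z. indicator S z * measure M {\<omega>\<in>space M. P \<omega> z}) \<in> borel_measurable lborel"
    by (rule measurable_cong[THEN iffD1, rotated]) (simp add: section2 measure_def indicator_def)
  have "(\<integral>\<omega>. measure lborel {z\<in>S. P \<omega> z} \<partial>M)
      = enn2real (\<integral>\<^sup>+\<omega>. ennreal (measure lborel {z\<in>S. P \<omega> z}) \<partial>M)"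
    by (rule integral_eq_nn_integral[OF meas1]) auto
  also have "(\<integral>\<^sup>+\<omega>. ennreal (measure lborel {z\<in>S. P \<omega> z}) \<partial>M)
      = (\<integral>\<^sup>+\<omega>. emeasure lborel (Pair \<omega> -` Q) \<partial>M)"
    by (intro nn_integral_cong)
      (metis section1 emeasure_eq_ennreal_measure finite_section infinity_ennreal_def less_imp_neq)
  also have "\<dots> = (\<integral>\<^sup>+z. emeasure M ((\<lambda>\<omega>. (\<omega>, z)) -` Q) \<partial>lborel)"
    using lborel.emeasure_pair_measure_alt[OF Q] emeasure_pair_measure_alt2[OF Q] by simp
  also have "\<dots> = (\<integral>\<^sup>+z. ennreal (indicator S z * measure M {\<omega>\<in>space M. P \<omega> z}) \<partial>lborel)"
    by (intro nn_integral_cong) (simp add: section2 emeasure_eq_measure)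
  also have "enn2real \<dots> = (\<integral>z. indicator S z * measure M {\<omega>\<in>space M. P \<omega> z} \<partial>lborel)"
    by (rule integral_eq_nn_integral[OF meas2, symmetric]) auto
  finally show ?thesis
    by (simp add: set_lebesgue_integral_def)
qed

lemma set_integrable_cbox_bounded:
  fixes f :: "'b::euclidean_space \<Rightarrow> real"
  assumes "f \<in> borel_measurable lborel" "\<And>x. \<bar>f x\<bar> \<le> B"
  shows "set_integrable lborel (cbox a b) f"
  unfolding set_integrable_def
  by (rule integrableI_bounded_set_indicator[where B=B]) (use assms in \<open>auto simp: emeasure_lborel_cbox_eq\<close>)

lemma set_integral_le_set_integral_superset:
  fixes f :: "'a \<Rightarrow> real"
  assumes "set_integrable M B f" "A \<in> sets M" "A \<subseteq> B" "\<And>x. x \<in> B \<Longrightarrow> 0 \<le> f x"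
  shows "(LINT x:A|M. f x) \<le> (LINT x:B|M. f x)"
proof -
  have "set_integrable M A f"
    using set_integrable_subset assms(1-3) .
  then show ?thesis
    using assms unfolding set_integrable_def set_lebesgue_integral_def
    by (intro integral_mono) (auto split: split_indicator)
qed

lemma set_integral_Icc_mult_Icc:
  fixes f g :: "real \<Rightarrow> real"
  assumes [measurable]: "f \<in> borel_measurable lborel" "g \<in> borel_measurable lborel"
    and bounded: "\<And>x. \<bar>f x\<bar> \<le> B" "\<And>y. \<bar>g y\<bar> \<le> C"
  shows "(LINT x:{a..b}|lborel. f x) * (LINT y:{c..d}|lborel. g y)
       = (LINT z:{a..b}\<times>{c..d}|lborel. f (fst z) * g (snd z))"
proof -
  let ?h = "\<lambda>z::real\<times>real. indicator ({a..b}\<times>{c..d}) z * (f (fst z) * g (snd z))"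
  have "(\<lambda>z::real\<times>real. f (fst z) * g (snd z)) \<in> borel_measurable (lborel \<Otimes>\<^sub>M lborel)"
    by measurable
  then have "set_integrable lborel (cbox (a, c) (b, d)) (\<lambda>z::real\<times>real. f (fst z) * g (snd z))"
    using bounded
    by (intro set_integrable_cbox_bounded[where B="B * C"])
       (auto simp: lborel_prod abs_mult intro: mult_mono')
  then have integrable: "integrable (lborel \<Otimes>\<^sub>M lborel) ?h"
    by (simp add: set_integrable_def lborel_prod cbox_Pair_eq)
  have "(LINT z:{a..b}\<times>{c..d}|lborel. f (fst z) * g (snd z)) = (\<integral>x. (\<integral>y. ?h (x, y) \<partial>lborel) \<partial>lborel)"
    using lborel_pair.integral_fst'[OF integrable] by (simp add: lborel_prod set_lebesgue_integral_def)
  also have "\<dots> = (\<integral>x. indicator {a..b} x * f x * (\<integral>y. indicator {c..d} y * g y \<partial>lborel) \<partial>lborel)"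
    by (simp add: indicator_times mult_ac flip: integral_mult_right_zero)
  also have "\<dots> = (LINT x:{a..b}|lborel. f x) * (LINT y:{c..d}|lborel. g y)"
    by (simp add: set_lebesgue_integral_def integral_mult_left_zero)
  finally show ?thesis ..
qed

lemma measure_Icc_below:
  fixes a b u :: real
  assumes "a \<le> b"
  shows "measure lborel {x\<in>{a..b}. x < u} = max 0 (min b u - a)"
proof -
  have "{x\<in>{a..b}. x < u} = (if u \<le> a then {} else if u \<le> b then {a..<u} else {a..b})"
    by auto
  then show ?thesis
    using assms by (simp add: measure_def)
qed

lemma (in prob_space) prob_eq_if_distr_eq:
  fixes U V :: "'a \<Rightarrow> real"
  assumes "distr M borel U = distr M borel V"
    and "random_variable borel U" "random_variable borel V" "A \<in> sets borel"
  shows "prob {\<omega>\<in>space M. U \<omega> \<in> A} = prob {\<omega>\<in>space M. V \<omega> \<in> A}"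
  using measure_distr[OF assms(2,4)] measure_distr[OF assms(3,4)] assms(1)
  by (simp add: vimage_def Int_def conj_commute)

section \<open>Covariance and variance\<close>

definition (in prob_space) covariance :: "('a \<Rightarrow> real) \<Rightarrow> ('a \<Rightarrow> real) \<Rightarrow> real" where
  "covariance U V = expectation (\<lambda>\<omega>. U \<omega> * V \<omega>) - expectation U * expectation V"

lemma (in prob_space) covariance_affine:
  assumes "integrable M U" "integrable M V" "integrable M (\<lambda>\<omega>. U \<omega> * V \<omega>)"
  shows "covariance (\<lambda>\<omega>. a + b * U \<omega>) (\<lambda>\<omega>. c + d * V \<omega>) = b * d * covariance U V"
  using assms by (simp add: covariance_def algebra_simps prob_space)

lemma (in prob_space) covariance_self_le_expectation:
  assumes [measurable]: "random_variable borel Z"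
    and bounds: "\<And>\<omega>. \<omega> \<in> space M \<Longrightarrow> 0 \<le> Z \<omega> \<and> Z \<omega> \<le> 1"
  shows "covariance Z Z \<le> expectation Z"
proof -
  have integrable: "integrable M Z"
    by (rule integrable_const_bound[where B=1]) (use bounds in auto)
  have "expectation (\<lambda>\<omega>. Z \<omega> * Z \<omega>) \<le> expectation Z"
    using bounds by (intro integral_mono integrable integrable_const_bound[where B=1])
      (auto intro: mult_left_le_one_le mult_le_one)
  moreover have "0 \<le> expectation Z"
    using bounds by (intro integral_nonneg_AE) auto
  then have "0 \<le> expectation Z * expectation Z"
    by simp
  ultimately show ?thesis
    unfolding covariance_def by linarith
qed

lemma sum_sum_symmetric:
  fixes c :: "nat \<Rightarrow> nat \<Rightarrow> 'a::comm_semiring_1"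
  assumes "\<And>k j. c k j = c j k"
  shows "(\<Sum>k<n. \<Sum>j<n. c k j) = (\<Sum>k<n. c k k) + 2 * (\<Sum>j<n. \<Sum>k<j. c k j)"
proof (induction n)
  case 0
  then show ?case by simp
next
  case (Suc n)
  have "(\<Sum>k<Suc n. \<Sum>j<Suc n. c k j) = (\<Sum>k<n. \<Sum>j<n. c k j) + (\<Sum>k<n. c k n) + (\<Sum>j<n. c n j) + c n n"
    by (simp add: sum.distrib add_ac)
  also have "(\<Sum>j<n. c n j) = (\<Sum>k<n. c k n)"
    using assms by simp
  finally show ?case
    using Suc by (simp add: algebra_simps mult_2)
qed

lemma (in prob_space) variance_sum:
  fixes Z :: "nat \<Rightarrow> 'a \<Rightarrow> real"
  assumes "\<And>k. integrable M (Z k)" "\<And>k j. integrable M (\<lambda>\<omega>. Z k \<omega> * Z j \<omega>)"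
  shows "variance (\<lambda>\<omega>. \<Sum>k<n. Z k \<omega>)
       = (\<Sum>k<n. covariance (Z k) (Z k)) + 2 * (\<Sum>j<n. \<Sum>k<j. covariance (Z k) (Z j))"
proof -
  have square: "(\<Sum>k<n. Z k \<omega>)\<^sup>2 = (\<Sum>k<n. \<Sum>j<n. Z k \<omega> * Z j \<omega>)" for \<omega>
    by (simp add: power2_eq_square sum_product)
  have "variance (\<lambda>\<omega>. \<Sum>k<n. Z k \<omega>) = expectation (\<lambda>\<omega>. (\<Sum>k<n. Z k \<omega>)\<^sup>2) - (expectation (\<lambda>\<omega>. \<Sum>k<n. Z k \<omega>))\<^sup>2"
    using assms by (intro variance_eq) (auto simp: square)
  also have "\<dots> = (\<Sum>k<n. \<Sum>j<n. covariance (Z k) (Z j))"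
    using assms by (simp add: square covariance_def power2_eq_square sum_product sum_subtractf)
  also have "\<dots> = (\<Sum>k<n. covariance (Z k) (Z k)) + 2 * (\<Sum>j<n. \<Sum>k<j. covariance (Z k) (Z j))"
    by (rule sum_sum_symmetric) (simp add: covariance_def mult.commute)
  finally show ?thesis .
qed

section \<open>Quadrant covariance and Hoeffding's identity\<close>

definition upper_quadrant_cov :: "'a measure \<Rightarrow> ('a \<Rightarrow> real) \<Rightarrow> ('a \<Rightarrow> real) \<Rightarrow> real \<Rightarrow> real \<Rightarrow> real" where
  "upper_quadrant_cov M U V x y =
     measure M {\<omega>\<in>space M. U \<omega> > x \<and> V \<omega> > y}
     - measure M {\<omega>\<in>space M. U \<omega> > x} * measure M {\<omega>\<in>space M. V \<omega> > y}"

lemma G_eq_set_integral_upper_quadrant_cov: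
  "G M U V u v = (LINT z:{-u..u}\<times>{-v..v}|lborel. upper_quadrant_cov M U V (fst z) (snd z))"
  unfolding G_def upper_quadrant_cov_def ..

lemma (in prob_space) abs_upper_quadrant_cov_le_1: "\<bar>upper_quadrant_cov M U V x y\<bar> \<le> 1"
proof -
  let ?A = "{\<omega>\<in>space M. U \<omega> > x}" and ?B = "{\<omega>\<in>space M. V \<omega> > y}"
    and ?AB = "{\<omega>\<in>space M. U \<omega> > x \<and> V \<omega> > y}"
  have "0 \<le> prob ?A * prob ?B" "prob ?A * prob ?B \<le> 1"
    by (simp_all add: mult_le_one)
  then show ?thesis
    unfolding upper_quadrant_cov_def abs_le_iff
    using prob_le_1[of ?AB] measure_nonneg[of M ?AB] by linarith
qed

lemma (in prob_space) borel_measurable_prob_greater: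
  fixes U :: "'a \<Rightarrow> real"
  assumes [measurable]: "random_variable borel U"
  shows "(\<lambda>x. prob {\<omega>\<in>space M. x < U \<omega>}) \<in> borel_measurable lborel"
  by (rule borel_measurable_measure_section) measurable

lemma (in prob_space) borel_measurable_prob_greater_pair:
  fixes U V :: "'a \<Rightarrow> real"
  assumes [measurable]: "random_variable borel U" "random_variable borel V"
  shows "(\<lambda>z. prob {\<omega>\<in>space M. fst z < U \<omega> \<and> snd z < V \<omega>}) \<in> borel_measurable lborel"
  by (rule borel_measurable_measure_section) (unfold lborel_prod[symmetric], measurable)

lemma (in prob_space) borel_measurable_upper_quadrant_cov:
  assumes "random_variable borel U" "random_variable borel V"
  shows "(\<lambda>z. upper_quadrant_cov M U V (fst z) (snd z)) \<in> borel_measurable lborel"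
  using borel_measurable_prob_greater_pair[OF assms] borel_measurable_prob_greater[OF assms(1)]
    borel_measurable_prob_greater[OF assms(2)]
  unfolding upper_quadrant_cov_def lborel_prod[symmetric] by measurable

lemma (in prob_space) upper_quadrant_cov_eq_lower:
  fixes U V :: "'a \<Rightarrow> real"
  assumes [measurable]: "random_variable borel U" "random_variable borel V"
  shows "upper_quadrant_cov M U V x y
       = prob {\<omega>\<in>space M. U \<omega> \<le> x \<and> V \<omega> \<le> y} - prob {\<omega>\<in>space M. U \<omega> \<le> x} * prob {\<omega>\<in>space M. V \<omega> \<le> y}"
proof -
  let ?A = "{\<omega>\<in>space M. U \<omega> \<le> x}" and ?B = "{\<omega>\<in>space M. V \<omega> \<le> y}"
  have events: "?A \<in> events" "?B \<in> events"
    by measurable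
  have "{\<omega>\<in>space M. U \<omega> > x} = space M - ?A" "{\<omega>\<in>space M. V \<omega> > y} = space M - ?B"
    "{\<omega>\<in>space M. U \<omega> > x \<and> V \<omega> > y} = space M - (?A \<union> ?B)"
    "{\<omega>\<in>space M. U \<omega> \<le> x \<and> V \<omega> \<le> y} = ?A \<inter> ?B"
    by auto
  moreover have "prob (?A \<union> ?B) = prob ?A + prob ?B - prob (?A \<inter> ?B)"
    using events by (intro measure_Un3) (auto simp: fmeasurable_def less_top[symmetric])
  ultimately show ?thesis
    unfolding upper_quadrant_cov_def
    using events by (simp add: finite_measure_compl prob_space algebra_simps)
qed

lemma (in prob_space) upper_quadrant_cov_nonneg_if_pairwise_PQD:
  assumes "pairwise_PQD M X" "\<And>n. random_variable borel (X n)" "1 \<le> k" "1 \<le> j" "k \<noteq> j"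
  shows "0 \<le> upper_quadrant_cov M (X k) (X j) x y"
  using assms unfolding pairwise_PQD_def by (simp add: upper_quadrant_cov_eq_lower)

lemma (in prob_space) G_nonneg:
  assumes "\<And>x y. 0 \<le> upper_quadrant_cov M U V x y"
  shows "0 \<le> G M U V u v"
  unfolding G_eq_set_integral_upper_quadrant_cov set_lebesgue_integral_def
  using assms by (intro integral_nonneg_AE) (auto split: split_indicator)

lemma (in prob_space) covariance_measure_below_eq_set_integral:
  assumes [measurable]: "random_variable borel U" "random_variable borel V"
  shows "covariance (\<lambda>\<omega>. measure lborel {x\<in>{a..b}. x < U \<omega>}) (\<lambda>\<omega>. measure lborel {y\<in>{c..d}. y < V \<omega>})
       = (LINT z:{a..b}\<times>{c..d}|lborel. upper_quadrant_cov M U V (fst z) (snd z))"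
proof -
  let ?F = "\<lambda>\<omega>. measure lborel {x\<in>{a..b}. x < U \<omega>}"
    and ?H = "\<lambda>\<omega>. measure lborel {y\<in>{c..d}. y < V \<omega>}"
  have box: "{a..b}\<times>{c..d} = cbox (a, c) (b, d)"
    by (simp add: cbox_Pair_eq)
  have product: "?F \<omega> * ?H \<omega> = measure lborel {z\<in>{a..b}\<times>{c..d}. fst z < U \<omega> \<and> snd z < V \<omega>}" for \<omega>
  proof -
    have "{z\<in>{a..b}\<times>{c..d}. fst z < U \<omega> \<and> snd z < V \<omega>} = ({a..b} \<inter> {..<U \<omega>}) \<times> ({c..d} \<inter> {..<V \<omega>})"
      by auto
    moreover have "{x\<in>{a..b}. x < U \<omega>} = {a..b} \<inter> {..<U \<omega>}" "{y\<in>{c..d}. y < V \<omega>} = {c..d} \<inter> {..<V \<omega>}"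
      by auto
    ultimately show ?thesis
      by (simp add: lborel_prod[symmetric] measure_def lborel.emeasure_pair_measure_Times enn2real_mult)
  qed
  have joint: "expectation (\<lambda>\<omega>. ?F \<omega> * ?H \<omega>)
      = (LINT z:{a..b}\<times>{c..d}|lborel. prob {\<omega>\<in>space M. fst z < U \<omega> \<and> snd z < V \<omega>})"
    unfolding product
    by (rule integral_measure_section_eq_set_integral)
       (simp_all add: box emeasure_lborel_cbox_eq, unfold lborel_prod[symmetric], measurable)
  have marginal: "expectation (\<lambda>\<omega>. measure lborel {x\<in>{e..f}. x < W \<omega>})
      = (LINT x:{e..f}|lborel. prob {\<omega>\<in>space M. x < W \<omega>})"
    if [measurable]: "random_variable borel W" for W :: "'a \<Rightarrow> real" and e f
    by (rule integral_measure_section_eq_set_integral) (auto simp: emeasure_lborel_Icc_eq)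
  have "expectation ?F * expectation ?H
      = (LINT z:{a..b}\<times>{c..d}|lborel. prob {\<omega>\<in>space M. fst z < U \<omega>} * prob {\<omega>\<in>space M. snd z < V \<omega>})"
    unfolding marginal[OF assms(1)] marginal[OF assms(2)]
    by (rule set_integral_Icc_mult_Icc[where B=1 and C=1])
       (simp_all add: borel_measurable_prob_greater)
  moreover have "set_integrable lborel ({a..b}\<times>{c..d})
      (\<lambda>z. prob {\<omega>\<in>space M. fst z < U \<omega> \<and> snd z < V \<omega>})"
    unfolding box
    by (rule set_integrable_cbox_bounded[OF borel_measurable_prob_greater_pair[OF assms], where B=1]) simp
  moreover have "set_integrable lborel ({a..b}\<times>{c..d})
      (\<lambda>z. prob {\<omega>\<in>space M. fst z < U \<omega>} * prob {\<omega>\<in>space M. snd z < V \<omega>})"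
    unfolding box using borel_measurable_prob_greater[of U] borel_measurable_prob_greater[of V]
    by (intro set_integrable_cbox_bounded[where B=1])
       (auto simp: lborel_prod[symmetric] abs_mult intro: mult_le_one)
  ultimately show ?thesis
    unfolding covariance_def joint upper_quadrant_cov_def by (simp add: set_integral_diff)
qed

lemma (in prob_space) covariance_measure_below_le_G:
  fixes U V :: "'a \<Rightarrow> real"
  assumes [measurable]: "random_variable borel U" "random_variable borel V"
    and nonneg: "\<And>x y. 0 \<le> upper_quadrant_cov M U V x y"
    and box: "-u \<le> a" "b \<le> u" "-v \<le> c" "d \<le> v"
  shows "covariance (\<lambda>\<omega>. measure lborel {x\<in>{a..b}. x < U \<omega>}) (\<lambda>\<omega>. measure lborel {y\<in>{c..d}. y < V \<omega>})
       \<le> G M U V u v"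
proof -
  have "set_integrable lborel ({-u..u}\<times>{-v..v}) (\<lambda>z. upper_quadrant_cov M U V (fst z) (snd z))"
    using set_integrable_cbox_bounded[OF borel_measurable_upper_quadrant_cov[OF assms(1,2)]
        abs_upper_quadrant_cov_le_1, of "(-u, -v)" "(u, v)"]
    by (simp add: cbox_Pair_eq)
  then show ?thesis
    unfolding covariance_measure_below_eq_set_integral[OF assms(1,2)]
      G_eq_set_integral_upper_quadrant_cov
    using box nonneg by (intro set_integral_le_set_integral_superset) (auto simp flip: borel_prod)
qed

lemma (in prob_space) integrable_measure_below:
  fixes U :: "'a \<Rightarrow> real"
  assumes [measurable]: "random_variable borel U" and "a \<le> b"
  shows "integrable M (\<lambda>\<omega>. measure lborel {x\<in>{a..b}. x < U \<omega>})"
  unfolding measure_Icc_below[OF \<open>a \<le> b\<close>]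
  by (rule integrable_const_bound[where B="b - a"]) (use \<open>a \<le> b\<close> in auto)

lemma (in prob_space) covariance_affine_measure_below_le_G:
  fixes U V :: "'a \<Rightarrow> real"
  assumes [measurable]: "random_variable borel U" "random_variable borel V"
    and nonneg: "\<And>x y. 0 \<le> upper_quadrant_cov M U V x y"
    and box: "-u \<le> a" "a \<le> b" "b \<le> u" "-v \<le> c" "c \<le> d" "d \<le> v"
    and "0 \<le> \<beta> * \<delta>"
  shows "covariance (\<lambda>\<omega>. \<alpha> + \<beta> * measure lborel {x\<in>{a..b}. x < U \<omega>})
                    (\<lambda>\<omega>. \<gamma> + \<delta> * measure lborel {y\<in>{c..d}. y < V \<omega>})
       \<le> \<beta> * \<delta> * G M U V u v"
proof -
  let ?F = "\<lambda>\<omega>. measure lborel {x\<in>{a..b}. x < U \<omega>}"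
    and ?H = "\<lambda>\<omega>. measure lborel {y\<in>{c..d}. y < V \<omega>}"
  have "integrable M (\<lambda>\<omega>. ?F \<omega> * ?H \<omega>)"
    unfolding measure_Icc_below[OF \<open>a \<le> b\<close>] measure_Icc_below[OF \<open>c \<le> d\<close>]
    by (rule integrable_const_bound[where B="(b - a) * (d - c)"])
       (use box in \<open>auto simp: abs_mult intro!: mult_mono\<close>)
  then have "covariance (\<lambda>\<omega>. \<alpha> + \<beta> * ?F \<omega>) (\<lambda>\<omega>. \<gamma> + \<delta> * ?H \<omega>) = \<beta> * \<delta> * covariance ?F ?H"
    using box by (intro covariance_affine integrable_measure_below) auto
  also have "\<dots> \<le> \<beta> * \<delta> * G M U V u v"
    using box by (intro mult_left_mono covariance_measure_below_le_G nonneg \<open>0 \<le> \<beta> * \<delta>\<close>) auto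
  finally show ?thesis .
qed

section \<open>Tail weights\<close>

text \<open>A continuous substitute for the indicator of \<open>u > t\<close>: unlike the indicator, it is an affine
  function of the Lebesgue measure of \<open>{t/2..t} \<inter> {..<u}\<close>, so Hoeffding's identity applies to it.\<close>

definition tail_weight :: "real \<Rightarrow> real \<Rightarrow> real" where
  "tail_weight t u = min 1 (max 0 (2 * u / t - 1))"

lemma tail_weight_bounds: "0 \<le> tail_weight t u" "tail_weight t u \<le> 1"
  by (simp_all add: tail_weight_def)

lemma tail_weight_eq_0: "0 \<le> t \<Longrightarrow> u \<le> t / 2 \<Longrightarrow> tail_weight t u = 0"
  by (cases "t = 0") (auto simp: tail_weight_def divide_le_eq)

lemma tail_weight_eq_1: "0 < t \<Longrightarrow> t \<le> u \<Longrightarrow> tail_weight t u = 1"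
  by (auto simp: tail_weight_def le_divide_eq)

lemma borel_measurable_tail_weight [measurable]:
  assumes [measurable]: "f \<in> borel_measurable M"
  shows "(\<lambda>x. tail_weight t (f x)) \<in> borel_measurable M"
  unfolding tail_weight_def by measurable

lemma tail_weight_eq_measure:
  assumes "0 < t"
  shows "tail_weight t u = 2 / t * measure lborel {x\<in>{t/2..t}. x < u}"
proof -
  have "measure lborel {x\<in>{t/2..t}. x < u} = max 0 (min t u - t/2)"
    using measure_Icc_below[of "t/2" t u] assms by simp
  then show ?thesis
    using assms by (auto simp: tail_weight_def min_def max_def field_simps)
qed

lemma tail_weight_uminus_eq_measure:
  assumes "0 < t"
  shows "tail_weight t (- u) = 1 - 2 / t * measure lborel {x\<in>{-t..-t/2}. x < u}"
proof -
  have "measure lborel {x\<in>{-t..-t/2}. x < u} = max 0 (min (-t/2) u + t)"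
    using measure_Icc_below[of "-t" "-t/2" u] assms by simp
  then show ?thesis
    using assms by (auto simp: tail_weight_def min_def max_def field_simps)
qed

lemma (in prob_space) covariance_tail_weight_le_G:
  fixes U V :: "'a \<Rightarrow> real"
  assumes "random_variable borel U" "random_variable borel V"
    and "\<And>x y. 0 \<le> upper_quadrant_cov M U V x y"
    and "0 < s" "0 < t"
  shows "covariance (\<lambda>\<omega>. tail_weight s (U \<omega>)) (\<lambda>\<omega>. tail_weight t (V \<omega>)) \<le> 4 / (s * t) * G M U V s t"
    and "covariance (\<lambda>\<omega>. tail_weight s (- U \<omega>)) (\<lambda>\<omega>. tail_weight t (- V \<omega>)) \<le> 4 / (s * t) * G M U V s t"
proof -
  show "covariance (\<lambda>\<omega>. tail_weight s (U \<omega>)) (\<lambda>\<omega>. tail_weight t (V \<omega>)) \<le> 4 / (s * t) * G M U V s t"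
    using covariance_affine_measure_below_le_G[OF assms(1-3), of s "s/2" s t "t/2" t "2/s" "2/t" 0 0]
      assms(4,5)
    by (simp add: tail_weight_eq_measure)
  show "covariance (\<lambda>\<omega>. tail_weight s (- U \<omega>)) (\<lambda>\<omega>. tail_weight t (- V \<omega>)) \<le> 4 / (s * t) * G M U V s t"
    using covariance_affine_measure_below_le_G[OF assms(1-3), of s "-s" "-s/2" t "-t" "-t/2" "-2/s" "-2/t" 1 1]
      assms(4,5)
    by (simp add: tail_weight_uminus_eq_measure)
qed

lemma (in prob_space) prob_abs_greater_le_tail_weights:
  fixes U :: "'a \<Rightarrow> real"
  assumes [measurable]: "random_variable borel U" and "0 < t"
  shows "prob {\<omega>\<in>space M. \<bar>U \<omega>\<bar> > t}
       \<le> expectation (\<lambda>\<omega>. tail_weight t (U \<omega>)) + expectation (\<lambda>\<omega>. tail_weight t (- U \<omega>))"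
proof -
  have integrable: "integrable M (\<lambda>\<omega>. tail_weight t (f \<omega>))"
    if [measurable]: "random_variable borel f" for f
    by (rule integrable_const_bound[where B=1]) (auto simp: tail_weight_bounds)
  have "prob {\<omega>\<in>space M. \<bar>U \<omega>\<bar> > t} = expectation (indicator {\<omega>\<in>space M. \<bar>U \<omega>\<bar> > t})"
    by simp
  also have "\<dots> \<le> expectation (\<lambda>\<omega>. tail_weight t (U \<omega>) + tail_weight t (- U \<omega>))"
    using \<open>0 < t\<close>
    by (intro integral_mono integrable_real_indicator Bochner_Integration.integrable_add integrable)
       (auto simp: less_top[symmetric] abs_if tail_weight_eq_1 tail_weight_bounds add_nonneg_nonneg
         split: split_indicator)
  also have "\<dots> = expectation (\<lambda>\<omega>. tail_weight t (U \<omega>)) + expectation (\<lambda>\<omega>. tail_weight t (- U \<omega>))"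
    by (intro Bochner_Integration.integral_add integrable) measurable
  finally show ?thesis .
qed

section \<open>A second-moment Borel--Cantelli argument\<close>

lemma sum_le_if_zero_from:
  fixes z :: "nat \<Rightarrow> real"
  assumes "\<And>k. 0 \<le> z k \<and> z k \<le> 1" "\<And>k. m \<le> k \<Longrightarrow> z k = 0"
  shows "(\<Sum>k<n. z k) \<le> real m"
proof -
  have "(\<Sum>k<n. z k) \<le> (\<Sum>k<max n m. z k)"
    using assms(1) by (intro sum_mono2) auto
  also have "\<dots> = (\<Sum>k<m. z k)"
    using assms(2) by (intro sum.mono_neutral_right) auto
  also have "\<dots> \<le> real m"
    using assms(1) sum_bounded_above[of "{..<m}" z 1] by simp
  finally show ?thesis .
qed

lemma (in prob_space) prob_sum_le_half_expectation:
  fixes Z :: "nat \<Rightarrow> 'a \<Rightarrow> real"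
  assumes [measurable]: "\<And>k. random_variable borel (Z k)"
    and bounds: "\<And>k \<omega>. \<omega> \<in> space M \<Longrightarrow> 0 \<le> Z k \<omega> \<and> Z k \<omega> \<le> 1"
    and cov: "(\<Sum>j<n. \<Sum>k<j. covariance (Z k) (Z j)) \<le> C"
    and mean: "\<mu> = (\<Sum>k<n. expectation (Z k))" "0 < \<mu>"
  shows "prob {\<omega>\<in>space M. (\<Sum>k<n. Z k \<omega>) \<le> \<mu> / 2} \<le> 4 * (\<mu> + 2 * C) / \<mu>\<^sup>2"
proof -
  let ?T = "\<lambda>\<omega>. \<Sum>k<n. Z k \<omega>"
  have integrable: "integrable M (Z k)" "integrable M (\<lambda>\<omega>. Z k \<omega> * Z j \<omega>)" for k j
    by (rule integrable_const_bound[where B=1], use bounds in \<open>auto intro: mult_le_one\<close>)+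
  have "integrable M (\<lambda>\<omega>. (?T \<omega>)\<^sup>2)"
  proof (rule integrable_const_bound[where B="real n ^ 2"])
    show "AE \<omega> in M. norm ((?T \<omega>)\<^sup>2) \<le> real n ^ 2"
    proof (rule AE_I2)
      fix \<omega> assume "\<omega> \<in> space M"
      then have "0 \<le> ?T \<omega>" "?T \<omega> \<le> real n"
        using bounds sum_bounded_above[of "{..<n}" "\<lambda>k. Z k \<omega>" 1] by (auto intro: sum_nonneg)
      then show "norm ((?T \<omega>)\<^sup>2) \<le> real n ^ 2"
        by (simp add: power_mono)
    qed
  qed measurable
  then have Chebyshev: "prob {\<omega>\<in>space M. \<mu> / 2 \<le> \<bar>?T \<omega> - expectation ?T\<bar>} \<le> variance ?T / (\<mu> / 2)\<^sup>2"
    using mean by (intro Chebyshev_inequality) auto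
  have variance: "variance ?T \<le> \<mu> + 2 * C"
    unfolding variance_sum[OF integrable] mean
    using cov covariance_self_le_expectation bounds by (intro add_mono sum_mono) auto
  have "expectation ?T = \<mu>"
    using mean integrable by simp
  then have "{\<omega>\<in>space M. ?T \<omega> \<le> \<mu> / 2} \<subseteq> {\<omega>\<in>space M. \<mu> / 2 \<le> \<bar>?T \<omega> - expectation ?T\<bar>}"
    by (auto simp: abs_if)
  then have "prob {\<omega>\<in>space M. ?T \<omega> \<le> \<mu> / 2} \<le> prob {\<omega>\<in>space M. \<mu> / 2 \<le> \<bar>?T \<omega> - expectation ?T\<bar>}"
    by (intro finite_measure_mono) measurable
  also have "\<dots> \<le> variance ?T / (\<mu> / 2)\<^sup>2"
    by (fact Chebyshev)
  also have "\<dots> \<le> (\<mu> + 2 * C) / (\<mu> / 2)\<^sup>2"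
    using variance by (simp add: divide_right_mono)
  also have "\<dots> = 4 * (\<mu> + 2 * C) / \<mu>\<^sup>2"
    by (simp add: power_divide)
  finally show ?thesis .
qed

lemma Chebyshev_bound_le_half:
  fixes \<mu> C :: real
  assumes "16 + 32 * \<bar>C\<bar> \<le> \<mu>"
  shows "4 * (\<mu> + 2 * C) / \<mu>\<^sup>2 \<le> 1 / 2"
proof -
  have "\<bar>C\<bar> \<le> \<bar>C\<bar> * \<mu>"
    using assms mult_left_mono[of 1 \<mu> "\<bar>C\<bar>"] by simp
  then have "8 * \<mu> + 16 * C \<le> (16 + 32 * \<bar>C\<bar>) * \<mu>"
    unfolding distrib_right mult.assoc using assms abs_ge_self[of C] abs_ge_zero[of C] by linarith
  also have "\<dots> \<le> \<mu> * \<mu>"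
    using assms by (intro mult_right_mono) auto
  moreover have "0 < \<mu> * \<mu>"
    using assms abs_ge_zero[of C] by simp
  ultimately show ?thesis
    by (simp add: power2_eq_square field_simps)
qed

lemma (in prob_space) prob_zero_from_le_half_if_not_summable:
  fixes Z :: "nat \<Rightarrow> 'a \<Rightarrow> real"
  assumes [measurable]: "\<And>k. random_variable borel (Z k)"
    and bounds: "\<And>k \<omega>. \<omega> \<in> space M \<Longrightarrow> 0 \<le> Z k \<omega> \<and> Z k \<omega> \<le> 1"
    and cov: "\<And>n. (\<Sum>j<n. \<Sum>k<j. covariance (Z k) (Z j)) \<le> C"
    and not_summable: "\<not> summable (\<lambda>k. expectation (Z k))"
  shows "prob {\<omega>\<in>space M. \<forall>k\<ge>m. Z k \<omega> = 0} \<le> 1 / 2"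
proof -
  define \<mu> where "\<mu> n = (\<Sum>k<n. expectation (Z k))" for n
  have "expectation (Z k) \<ge> 0" for k
    using bounds by (intro integral_nonneg_AE) auto
  then obtain n where n: "2 * real m \<le> \<mu> n" "16 + 32 * \<bar>C\<bar> \<le> \<mu> n"
    using not_summable
      summableI_nonneg_bounded[of "\<lambda>k. expectation (Z k)" "max (2 * real m) (16 + 32 * \<bar>C\<bar>)"]
    unfolding \<mu>_def by (meson linear max.bounded_iff)
  have "{\<omega>\<in>space M. \<forall>k\<ge>m. Z k \<omega> = 0} \<subseteq> {\<omega>\<in>space M. (\<Sum>k<n. Z k \<omega>) \<le> \<mu> n / 2}"
  proof safe
    fix \<omega> assume "\<omega> \<in> space M" "\<forall>k\<ge>m. Z k \<omega> = 0"
    then have "(\<Sum>k<n. Z k \<omega>) \<le> real m"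
      using bounds by (intro sum_le_if_zero_from) auto
    with n(1) show "(\<Sum>k<n. Z k \<omega>) \<le> \<mu> n / 2"
      by simp
  qed
  then have "prob {\<omega>\<in>space M. \<forall>k\<ge>m. Z k \<omega> = 0} \<le> prob {\<omega>\<in>space M. (\<Sum>k<n. Z k \<omega>) \<le> \<mu> n / 2}"
    by (intro finite_measure_mono) measurable
  also have "\<dots> \<le> 4 * (\<mu> n + 2 * C) / (\<mu> n)\<^sup>2"
    using n(2) abs_ge_zero[of C]
    by (intro prob_sum_le_half_expectation[OF _ bounds cov]) (auto simp: \<mu>_def)
  also have "\<dots> \<le> 1 / 2"
    using n(2) by (rule Chebyshev_bound_le_half)
  finally show ?thesis .
qed

lemma (in prob_space) summable_expectation_if_AE_eventually_zero:
  fixes Z :: "nat \<Rightarrow> 'a \<Rightarrow> real"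
  assumes [measurable]: "\<And>k. random_variable borel (Z k)"
    and bounds: "\<And>k \<omega>. \<omega> \<in> space M \<Longrightarrow> 0 \<le> Z k \<omega> \<and> Z k \<omega> \<le> 1"
    and cov: "\<And>n. (\<Sum>j<n. \<Sum>k<j. covariance (Z k) (Z j)) \<le> C"
    and AE_zero: "AE \<omega> in M. eventually (\<lambda>k. Z k \<omega> = 0) sequentially"
  shows "summable (\<lambda>k. expectation (Z k))"
proof (rule ccontr)
  assume not_summable: "\<not> summable (\<lambda>k. expectation (Z k))"
  define E where "E m = {\<omega>\<in>space M. \<forall>k\<ge>m. Z k \<omega> = 0}" for m
  have E_sets [measurable]: "E m \<in> events" for m
    unfolding E_def by measurable
  have "(\<lambda>m. prob (E m)) \<longlonglongrightarrow> prob (\<Union>m. E m)"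
    by (intro finite_Lim_measure_incseq) (auto simp: incseq_def E_def)
  then have "prob (\<Union>m. E m) \<le> 1 / 2"
    unfolding E_def
    by (rule LIMSEQ_le_const2)
       (use prob_zero_from_le_half_if_not_summable[OF _ bounds cov not_summable] in auto)
  moreover have "AE \<omega> in M. \<omega> \<in> (\<Union>m. E m)"
    using AE_zero AE_space by eventually_elim (auto simp: E_def eventually_sequentially)
  then have "prob (\<Union>m. E m) = 1"
    by (intro AE_in_set_eq_1[THEN iffD1]) measurable
  ultimately show False
    by simp
qed

lemma (in prob_space) summable_expectation_tail_weight:
  fixes Y :: "nat \<Rightarrow> 'a \<Rightarrow> real" and t :: "nat \<Rightarrow> real" and b :: "nat \<Rightarrow> nat \<Rightarrow> real"
  assumes [measurable]: "\<And>k. random_variable borel (Y k)"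
    and t_nonneg: "\<And>k. 0 \<le> t k"
    and cov: "\<And>k j. k < j \<Longrightarrow>
      covariance (\<lambda>\<omega>. tail_weight (t k) (Y k \<omega>)) (\<lambda>\<omega>. tail_weight (t j) (Y j \<omega>)) \<le> b k j"
    and b_nonneg: "\<And>k j. k < j \<Longrightarrow> 0 \<le> b k j"
    and summable: "summable (\<lambda>j. \<Sum>k<j. b k j)"
    and small: "AE \<omega> in M. eventually (\<lambda>k. Y k \<omega> \<le> t k / 2) sequentially"
  shows "summable (\<lambda>k. expectation (\<lambda>\<omega>. tail_weight (t k) (Y k \<omega>)))"
proof (rule summable_expectation_if_AE_eventually_zero)
  fix n
  have "(\<Sum>j<n. \<Sum>k<j. covariance (\<lambda>\<omega>. tail_weight (t k) (Y k \<omega>)) (\<lambda>\<omega>. tail_weight (t j) (Y j \<omega>)))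
      \<le> (\<Sum>j<n. \<Sum>k<j. b k j)"
    using cov by (intro sum_mono) auto
  also have "\<dots> \<le> (\<Sum>j. \<Sum>k<j. b k j)"
    using summable b_nonneg by (intro sum_le_suminf sum_nonneg) auto
  finally show "(\<Sum>j<n. \<Sum>k<j. covariance (\<lambda>\<omega>. tail_weight (t k) (Y k \<omega>)) (\<lambda>\<omega>. tail_weight (t j) (Y j \<omega>)))
      \<le> (\<Sum>j. \<Sum>k<j. b k j)" .
  show "AE \<omega> in M. eventually (\<lambda>k. tail_weight (t k) (Y k \<omega>) = 0) sequentially"
    using small by eventually_elim (auto elim: eventually_mono simp: tail_weight_eq_0 t_nonneg)
qed (auto simp: tail_weight_bounds)

lemma (in prob_space) summable_prob_abs_greater_if_quadrant_dependent:
  fixes Y :: "nat \<Rightarrow> 'a \<Rightarrow> real" and t :: "nat \<Rightarrow> real"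
  assumes [measurable]: "\<And>k. random_variable borel (Y k)"
    and nonneg: "\<And>k j x y. k \<noteq> j \<Longrightarrow> 0 \<le> upper_quadrant_cov M (Y k) (Y j) x y"
    and t_pos: "\<And>k. 0 < t k"
    and summable: "summable (\<lambda>j. \<Sum>k<j. G M (Y k) (Y j) (t k) (t j) / (t k * t j))"
    and small: "AE \<omega> in M. eventually (\<lambda>k. \<bar>Y k \<omega>\<bar> \<le> t k / 2) sequentially"
  shows "summable (\<lambda>k. prob {\<omega>\<in>space M. \<bar>Y k \<omega>\<bar> > t k})"
proof -
  define b where "b k j = 4 / (t k * t j) * G M (Y k) (Y j) (t k) (t j)" for k j
  have b_nonneg: "0 \<le> b k j" if "k < j" for k j
    unfolding b_def using that t_pos[of k] t_pos[of j]
    by (intro mult_nonneg_nonneg G_nonneg nonneg) auto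
  have "summable (\<lambda>j. 4 * (\<Sum>k<j. G M (Y k) (Y j) (t k) (t j) / (t k * t j)))"
    using summable by (rule summable_mult)
  then have summable_b: "summable (\<lambda>j. \<Sum>k<j. b k j)"
    by (simp add: b_def sum_distrib_left)
  have small_pos: "AE \<omega> in M. eventually (\<lambda>k. Y k \<omega> \<le> t k / 2) sequentially"
    and small_neg: "AE \<omega> in M. eventually (\<lambda>k. - Y k \<omega> \<le> t k / 2) sequentially"
    using small by (eventually_elim, auto elim: eventually_mono)+
  have "summable (\<lambda>k. expectation (\<lambda>\<omega>. tail_weight (t k) (Y k \<omega>)))"
  proof (rule summable_expectation_tail_weight[OF _ _ _ b_nonneg summable_b small_pos])
    show "covariance (\<lambda>\<omega>. tail_weight (t k) (Y k \<omega>)) (\<lambda>\<omega>. tail_weight (t j) (Y j \<omega>)) \<le> b k j"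
      if "k < j" for k j
      unfolding b_def
      using covariance_tail_weight_le_G(1)[OF _ _ nonneg[OF less_imp_neq[OF that]] t_pos t_pos] by simp
  qed (simp_all add: less_imp_le t_pos)
  moreover have "summable (\<lambda>k. expectation (\<lambda>\<omega>. tail_weight (t k) (- Y k \<omega>)))"
  proof (rule summable_expectation_tail_weight[OF _ _ _ b_nonneg summable_b small_neg])
    show "covariance (\<lambda>\<omega>. tail_weight (t k) (- Y k \<omega>)) (\<lambda>\<omega>. tail_weight (t j) (- Y j \<omega>)) \<le> b k j"
      if "k < j" for k j
      unfolding b_def
      using covariance_tail_weight_le_G(2)[OF _ _ nonneg[OF less_imp_neq[OF that]] t_pos t_pos] by simp
  qed (simp_all add: less_imp_le t_pos)
  ultimately have "summable (\<lambda>k. expectation (\<lambda>\<omega>. tail_weight (t k) (Y k \<omega>))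
                              + expectation (\<lambda>\<omega>. tail_weight (t k) (- Y k \<omega>)))"
    by (rule summable_add)
  then show ?thesis
    by (rule summable_comparison_test') (use prob_abs_greater_le_tail_weights[OF _ t_pos] in simp)
qed

section \<open>Growth of the summands\<close>

lemma increment_div_powr_tendsto_zero:
  fixes x :: "nat \<Rightarrow> real"
  assumes "0 < s" and sums: "(\<lambda>n. (\<Sum>k=1..n. (x k - c)) / real n powr s) \<longlonglongrightarrow> 0"
  shows "(\<lambda>n. x n / real n powr s) \<longlonglongrightarrow> 0"
proof -
  define a where "a n = (\<Sum>k=1..n. (x k - c)) / real n powr s" for n
  define r where "r n = real n powr s / real (Suc n) powr s" for n
  have "a n * real n powr s = (\<Sum>k=1..n. (x k - c))" for n
    by (cases n) (simp_all add: a_def)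
  then have decomposition:
    "x (Suc n) / real (Suc n) powr s = c * real (Suc n) powr (- s) + a (Suc n) - a n * r n" for n
    unfolding r_def using a_def[of "Suc n"] by (simp add: powr_minus_divide field_simps)
  have "(\<lambda>n. real (Suc n) powr (- s)) \<longlonglongrightarrow> 0"
    using \<open>0 < s\<close>
    by (intro tendsto_neg_powr filterlim_compose[OF filterlim_real_sequentially filterlim_Suc]) auto
  moreover have "(\<lambda>n. a (Suc n)) \<longlonglongrightarrow> 0"
    using sums unfolding a_def by (rule LIMSEQ_Suc)
  moreover have "(\<lambda>n. a n * r n) \<longlonglongrightarrow> 0"
  proof (rule Lim_null_comparison)
    have "0 \<le> r n" "r n \<le> 1" for n
      using \<open>0 < s\<close> by (auto simp: r_def divide_le_eq_1 intro: powr_mono2)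
    then show "\<forall>\<^sub>F n in sequentially. norm (a n * r n) \<le> \<bar>a n\<bar>"
      by (intro always_eventually allI) (simp add: abs_mult mult_left_le)
    show "(\<lambda>n. \<bar>a n\<bar>) \<longlonglongrightarrow> 0"
      using sums unfolding a_def by (rule tendsto_rabs_zero)
  qed
  ultimately have "(\<lambda>n. c * real (Suc n) powr (- s) + a (Suc n) - a n * r n) \<longlonglongrightarrow> c * 0 + 0 - 0"
    by (intro tendsto_diff tendsto_add tendsto_mult tendsto_const)
  then have "(\<lambda>n. x (Suc n) / real (Suc n) powr s) \<longlonglongrightarrow> 0"
    unfolding decomposition by simp
  then show ?thesis
    by (rule LIMSEQ_imp_Suc)
qed

lemma eventually_abs_le_half_powr:
  fixes x :: "nat \<Rightarrow> real"
  assumes "0 < s" and "(\<lambda>n. (\<Sum>k=1..n. (x k - c)) / real n powr s) \<longlonglongrightarrow> 0"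
  shows "eventually (\<lambda>n. \<bar>x n\<bar> \<le> real n powr s / 2) sequentially"
proof -
  have "eventually (\<lambda>n. \<bar>x n / real n powr s\<bar> < 1 / 2) sequentially"
    using tendstoD[OF increment_div_powr_tendsto_zero[OF assms], of "1 / 2"] by (simp add: dist_real_def)
  moreover have "eventually (\<lambda>n. 1 \<le> n) sequentially"
    by (rule eventually_ge_at_top)
  ultimately show ?thesis
    by eventually_elim (simp add: abs_divide pos_divide_less_eq)
qed

theorem theorem1:
  fixes M :: "'a measure" and X :: "nat \<Rightarrow> 'a \<Rightarrow> real" and p c :: real
  assumes "prob_space M"
    and "\<And>n. X n \<in> borel_measurable M"
    and "1 \<le> p" and "p < 2"
    and "\<And>n. 1 \<le> n \<Longrightarrow> distr M borel (X n) = distr M borel (X 1)"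
    and "pairwise_PQD M X"
    and "AE \<omega> in M. (\<lambda>n. (\<Sum>k=1..n. (X k \<omega> - c)) / real n powr (1/p)) \<longlonglongrightarrow> 0"
    and "summable (\<lambda>j. \<Sum>k\<in>{1..<j}. (real k * real j) powr (-1/p)
            * G M (X k) (X j) (real k powr (1/p)) (real j powr (1/p)))"
  shows "summable (\<lambda>k. measure M {\<omega>\<in>space M. \<bar>X 1 \<omega>\<bar> > real (Suc k) powr (1/p)})"
proof -
  interpret prob_space M
    by (fact assms(1))
  define t where "t k = real (Suc k) powr (1/p)" for k
  have "summable (\<lambda>k. prob {\<omega>\<in>space M. \<bar>X (Suc k) \<omega>\<bar> > t k})"
  proof (rule summable_prob_abs_greater_if_quadrant_dependent)
    show "0 \<le> upper_quadrant_cov M (X (Suc k)) (X (Suc j)) x y" if "k \<noteq> j" for k j x y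
      using that by (intro upper_quadrant_cov_nonneg_if_pairwise_PQD[OF assms(6,2)]) auto
    define g where "g j = (\<Sum>k\<in>{1..<j}. (real k * real j) powr (-1/p)
        * G M (X k) (X j) (real k powr (1/p)) (real j powr (1/p)))" for j
    have "summable g"
      unfolding g_def[abs_def] by (fact assms(8))
    then have "summable (\<lambda>j. g (Suc j))"
      by (simp only: summable_Suc_iff)
    moreover have "(\<Sum>k<j. G M (X (Suc k)) (X (Suc j)) (t k) (t j) / (t k * t j)) = g (Suc j)" for j
      unfolding g_def One_nat_def sum.shift_bounds_Suc_ivl atLeast0LessThan t_def
      by (intro sum.cong refl) (simp add: powr_mult powr_minus_divide)
    ultimately show "summable (\<lambda>j. \<Sum>k<j. G M (X (Suc k)) (X (Suc j)) (t k) (t j) / (t k * t j))"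
      by simp
    show "AE \<omega> in M. eventually (\<lambda>k. \<bar>X (Suc k) \<omega>\<bar> \<le> t k / 2) sequentially"
      using assms(7)
    proof eventually_elim
      case (elim \<omega>)
      have "eventually (\<lambda>n. \<bar>X n \<omega>\<bar> \<le> real n powr (1/p) / 2) sequentially"
        using assms(3) by (intro eventually_abs_le_half_powr[OF _ elim]) simp
      then show ?case
        unfolding t_def
          eventually_sequentially_Suc[of "\<lambda>n. \<bar>X n \<omega>\<bar> \<le> real n powr (1/p) / 2", symmetric] .
    qed
  qed (simp_all add: t_def assms(2))
  moreover have "prob {\<omega>\<in>space M. \<bar>X (Suc k) \<omega>\<bar> > t k} = prob {\<omega>\<in>space M. \<bar>X 1 \<omega>\<bar> > t k}" for k
    using prob_eq_if_distr_eq[OF assms(5)[of "Suc k"] assms(2) assms(2), of "{x. \<bar>x\<bar> > t k}"] by simp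
  ultimately show ?thesis
    by (simp add: t_def)
qed

end
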